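(* Let $m=m_n$ with $m^2\to\infty$ and $m^2/n\to 0$ as $n\to\infty$. Let $\gamma>1$ be a constant and $\delta = \gamma\, 2e^{-3/4}\sqrt{m}\,4^{-\xi n/m^2}$, with $\xi=\xi_m$ as in the context. Then \[ 2^{-n} \sum_{k=0}^{\lfloor n/4\rfloor} \binom{n}{k} R_k(\delta) + 2^{-n} \sum_{k=\lceil 3n/4\rceil}^n \binom{n}{k} R_k(\delta) = o(1) \quad (n\to\infty). \]
   Context: An $m\times m$ GOE matrix is a random symmetric matrix whose entries on and above the diagonal are independent centered normal variables, with variance $2$ on the diagonal and variance $1$ off the diagonal. Two GOE matrices $X,Y$ have correlation $\rho\in[-1,1]$ if the pairs $(X_{ij},Y_{ij})$, $i\le j$, are independent across index pairs, each jointly normal with $\mathrm{corr}(X_{ij},Y_{ij})=\rho$. For $k=0,\ldots,n$ let $\rho_k = 1-2k/n$ and \[R_k(\delta) = \frac{\mathbb{P}(\|X_k\| \leq \delta,\ \|Y_k\| \leq \delta)}{\mathbb{P}(\|X\| \leq \delta)^2},\] where $X$ is an $m\times m$ GOE matrix and $X_k,Y_k$ are $m\times m$ GOE matrices with correlation $\rho_k$; $\|\cdot\|$ is the spectral norm. The sequence $\xi=\xi_m\to1$ is defined by $\mathbb{P}(\|X\| \leq \delta) = \left(\frac{e^{3/4}}{2\sqrt{m}}\delta\right)^{\xi^{-1}m^2/2}$. *)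

theory Defs
  imports "HOL-Probability.Probability"
begin

definition goe_idx :: "nat \<Rightarrow> (nat \<times> nat) set" where
  "goe_idx m = {(i, j). i \<le> j \<and> j < m}"

definition goe_var :: "nat \<times> nat \<Rightarrow> real" where
  "goe_var p = (if fst p = snd p then 2 else 1)"

definition sym_of :: "(nat \<times> nat \<Rightarrow> real) \<Rightarrow> nat \<Rightarrow> nat \<Rightarrow> real" where
  "sym_of g i j = (if i \<le> j then g (i, j) else g (j, i))"

definition spec_norm :: "nat \<Rightarrow> (nat \<Rightarrow> nat \<Rightarrow> real) \<Rightarrow> real" where
  "spec_norm m A = Sup {sqrt (\<Sum>i<m. (\<Sum>j<m. A i j * x j)\<^sup>2) | x. (\<Sum>j<m. (x j)\<^sup>2) = 1}"

definition std_gauss :: "real measure" where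
  "std_gauss = density lborel std_normal_density"

definition goe_space :: "nat \<Rightarrow> (nat \<times> nat \<Rightarrow> real) measure" where
  "goe_space m = PiM (goe_idx m) (\<lambda>_. std_gauss)"

definition goe_mat :: "(nat \<times> nat \<Rightarrow> real) \<Rightarrow> nat \<Rightarrow> nat \<Rightarrow> real" where
  "goe_mat z = sym_of (\<lambda>p. sqrt (goe_var p) * z p)"

text \<open>Probability space for a pair of correlated GOE matrices: two independent families
  of i.i.d. standard normals (tagged False / True).\<close>
definition goe_pair_space :: "nat \<Rightarrow> ((nat \<times> nat) \<times> bool \<Rightarrow> real) measure" where
  "goe_pair_space m = PiM (goe_idx m \<times> UNIV) (\<lambda>_. std_gauss)"

text \<open>X entry = sqrt(var) Z1, Y entry = sqrt(var) (rho Z1 + sqrt(1-rho^2) Z2):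
  jointly normal, same variance, correlation rho, independent across index pairs.\<close>
definition corr_X :: "((nat \<times> nat) \<times> bool \<Rightarrow> real) \<Rightarrow> nat \<Rightarrow> nat \<Rightarrow> real" where
  "corr_X w = sym_of (\<lambda>p. sqrt (goe_var p) * w (p, False))"

definition corr_Y :: "real \<Rightarrow> ((nat \<times> nat) \<times> bool \<Rightarrow> real) \<Rightarrow> nat \<Rightarrow> nat \<Rightarrow> real" where
  "corr_Y \<rho> w = sym_of (\<lambda>p. sqrt (goe_var p) * (\<rho> * w (p, False) + sqrt (1 - \<rho>\<^sup>2) * w (p, True)))"

definition goe_small_prob :: "nat \<Rightarrow> real \<Rightarrow> real" where
  "goe_small_prob m \<delta> =
     measure (goe_space m) {z \<in> space (goe_space m). spec_norm m (goe_mat z) \<le> \<delta>}"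

definition goe_pair_small_prob :: "nat \<Rightarrow> real \<Rightarrow> real \<Rightarrow> real" where
  "goe_pair_small_prob m \<rho> \<delta> =
     measure (goe_pair_space m)
       {w \<in> space (goe_pair_space m). spec_norm m (corr_X w) \<le> \<delta> \<and> spec_norm m (corr_Y \<rho> w) \<le> \<delta>}"

definition R_ratio :: "nat \<Rightarrow> nat \<Rightarrow> nat \<Rightarrow> real \<Rightarrow> real" where
  "R_ratio m n k \<delta> = goe_pair_small_prob m (1 - 2 * real k / real n) \<delta> / (goe_small_prob m \<delta>)\<^sup>2"

end

theory Submission
  imports Defs "HOL-Real_Asymp.Real_Asymp"
begin

text \<open>
  Write \<open>Y = \<rho> X + sqrt (1 - \<rho>\<^sup>2) Z\<close> with \<open>X\<close>, \<open>Z\<close> independent GOE matrices. On the event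
  \<open>\<parallel>X\<parallel>, \<parallel>Y\<parallel> \<le> \<delta>\<close> the triangle inequality gives \<open>\<parallel>Z\<parallel> \<le> t \<delta>\<close> with
  \<open>t = (1 + \<bar>\<rho>\<bar>) / sqrt (1 - \<rho>\<^sup>2)\<close>, and dividing a standard Gaussian vector by \<open>t \<ge> 1\<close>
  multiplies its density by at most \<open>t\<close> per coordinate. Hence \<open>R\<^sub>k \<le> (n / j) ^ (m\<^sup>2 / 2)\<close>
  for \<open>j = min k (n - k) > 0\<close>. The choice of \<open>\<delta>\<close> makes
  \<open>P(\<parallel>X\<parallel> \<le> \<delta>) = 2 ^ (- n) \<gamma> ^ (m\<^sup>2 / (2 \<xi>))\<close>, so also
  \<open>R\<^sub>k \<le> 1 / P(\<parallel>X\<parallel> \<le> \<delta>) = 2 ^ n e ^ (- b)\<close> with \<open>b\<close> of order \<open>m\<^sup>2\<close>.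

  In both tails \<open>j \<le> n / 4\<close>. Terms whose binomial coefficient is at most \<open>e ^ (b / 2) 2 ^ (- j)\<close>
  contribute \<open>O (e ^ (- b / 2))\<close> through the second bound. Otherwise \<open>C(n, j) \<le> (e n / j) ^ j\<close>
  forces \<open>j log (2 e n / j) > b / 2\<close>, and as \<open>m\<^sup>2 = o(n)\<close> this makes
  \<open>(n / j) ^ (m\<^sup>2 / 2) \<le> 2 ^ (n / 8)\<close>; after the factor \<open>2 ^ (- n)\<close> these terms sum to at most
  \<open>2 ^ (- 7 n / 8) (4 / 3 ^ (3 / 4)) ^ n\<close>, which decays exponentially.
\<close>

section \<open>Spectral norm\<close>

lemma abs_le_one_if_sum_squares_eq_one:
  fixes x :: "nat \<Rightarrow> real"
  assumes "(\<Sum>j<m. (x j)\<^sup>2) = 1" and "j < m"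
  shows "\<bar>x j\<bar> \<le> 1"
proof -
  have "(x j)\<^sup>2 \<le> (\<Sum>j<m. (x j)\<^sup>2)"
    by (rule member_le_sum) (use assms(2) in auto)
  with assms(1) show ?thesis
    by (simp add: abs_square_le_1)
qed

lemma bdd_above_spec_norm_set:
  fixes m :: nat and A :: "nat \<Rightarrow> nat \<Rightarrow> real"
  shows "bdd_above {sqrt (\<Sum>i<m. (\<Sum>j<m. A i j * x j)\<^sup>2) | x. (\<Sum>j<m. (x j)\<^sup>2) = 1}"
proof (rule bdd_aboveI, safe)
  fix x :: "nat \<Rightarrow> real" assume x: "(\<Sum>j<m. (x j)\<^sup>2) = 1"
  have "\<bar>\<Sum>j<m. A i j * x j\<bar> \<le> (\<Sum>j<m. \<bar>A i j\<bar>)" for i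
  proof -
    have "\<bar>\<Sum>j<m. A i j * x j\<bar> \<le> (\<Sum>j<m. \<bar>A i j\<bar> * \<bar>x j\<bar>)"
      unfolding abs_mult[symmetric] by (rule sum_abs)
    also have "\<dots> \<le> (\<Sum>j<m. \<bar>A i j\<bar>)"
      using abs_le_one_if_sum_squares_eq_one[OF x]
      by (intro sum_mono) (simp add: mult_left_le)
    finally show ?thesis .
  qed
  then have "(\<Sum>j<m. A i j * x j)\<^sup>2 \<le> (\<Sum>j<m. \<bar>A i j\<bar>)\<^sup>2" for i
    by (meson abs_ge_zero order_trans power2_le_iff_abs_le)
  then show "sqrt (\<Sum>i<m. (\<Sum>j<m. A i j * x j)\<^sup>2) \<le> sqrt (\<Sum>i<m. (\<Sum>j<m. \<bar>A i j\<bar>)\<^sup>2)"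
    by (intro real_sqrt_le_mono sum_mono)
qed

lemma spec_norm_upper:
  assumes "(\<Sum>j<m. (x j)\<^sup>2) = 1"
  shows "sqrt (\<Sum>i<m. (\<Sum>j<m. A i j * x j)\<^sup>2) \<le> spec_norm m A"
  unfolding spec_norm_def using assms bdd_above_spec_norm_set
  by (intro cSup_upper) auto

lemma spec_norm_least:
  assumes "m \<ge> 1"
    and "\<And>x. (\<Sum>j<m. (x j)\<^sup>2) = 1 \<Longrightarrow> sqrt (\<Sum>i<m. (\<Sum>j<m. A i j * x j)\<^sup>2) \<le> c"
  shows "spec_norm m A \<le> c"
proof -
  define e :: "nat \<Rightarrow> real" where "e j = (if j = 0 then 1 else 0)" for j
  have "(\<Sum>j<m. (e j)\<^sup>2) = (\<Sum>j<m. if j = 0 then 1 else 0)"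
    unfolding e_def by (intro sum.cong) auto
  also have "\<dots> = 1"
    using assms(1) by simp
  finally have "(\<Sum>j<m. (e j)\<^sup>2) = 1" .
  then have "{sqrt (\<Sum>i<m. (\<Sum>j<m. A i j * x j)\<^sup>2) | x. (\<Sum>j<m. (x j)\<^sup>2) = 1} \<noteq> {}"
    by auto
  then show ?thesis
    unfolding spec_norm_def using assms(2) by (intro cSup_least) auto
qed

lemma spec_norm_cong:
  assumes "\<And>i j. i < m \<Longrightarrow> j < m \<Longrightarrow> A i j = B i j"
  shows "spec_norm m A = spec_norm m B"
proof -
  have "(\<Sum>i<m. (\<Sum>j<m. A i j * x j)\<^sup>2) = (\<Sum>i<m. (\<Sum>j<m. B i j * x j)\<^sup>2)" for x
    using assms by (intro sum.cong refl arg_cong[where f = "\<lambda>t. t\<^sup>2"]) auto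
  then show ?thesis
    unfolding spec_norm_def by simp
qed

lemma spec_norm_add_le:
  assumes "m \<ge> 1"
  shows "spec_norm m (\<lambda>i j. A i j + B i j) \<le> spec_norm m A + spec_norm m B"
proof (rule spec_norm_least[OF assms])
  fix x :: "nat \<Rightarrow> real" assume x: "(\<Sum>j<m. (x j)\<^sup>2) = 1"
  have "sqrt (\<Sum>i<m. (\<Sum>j<m. (A i j + B i j) * x j)\<^sup>2)
      = L2_set (\<lambda>i. (\<Sum>j<m. A i j * x j) + (\<Sum>j<m. B i j * x j)) {..<m}"
    unfolding L2_set_def by (simp add: distrib_right sum.distrib)
  also have "\<dots> \<le> L2_set (\<lambda>i. \<Sum>j<m. A i j * x j) {..<m} + L2_set (\<lambda>i. \<Sum>j<m. B i j * x j) {..<m}"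
    by (rule L2_set_triangle_ineq)
  also have "\<dots> \<le> spec_norm m A + spec_norm m B"
    unfolding L2_set_def using spec_norm_upper[OF x] by (intro add_mono)
  finally show "sqrt (\<Sum>i<m. (\<Sum>j<m. (A i j + B i j) * x j)\<^sup>2) \<le> spec_norm m A + spec_norm m B" .
qed

lemma spec_norm_scale_le:
  assumes "m \<ge> 1"
  shows "spec_norm m (\<lambda>i j. c * A i j) \<le> \<bar>c\<bar> * spec_norm m A"
proof (rule spec_norm_least[OF assms])
  fix x :: "nat \<Rightarrow> real" assume x: "(\<Sum>j<m. (x j)\<^sup>2) = 1"
  have "(\<Sum>j<m. c * A i j * x j) = c * (\<Sum>j<m. A i j * x j)" for i
    by (simp add: sum_distrib_left mult.assoc)
  then have "(\<Sum>i<m. (\<Sum>j<m. c * A i j * x j)\<^sup>2) = (\<Sum>i<m. c\<^sup>2 * (\<Sum>j<m. A i j * x j)\<^sup>2)"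
    by (simp only: power_mult_distrib)
  also have "\<dots> = c\<^sup>2 * (\<Sum>i<m. (\<Sum>j<m. A i j * x j)\<^sup>2)"
    by (simp only: sum_distrib_left)
  finally have "sqrt (\<Sum>i<m. (\<Sum>j<m. c * A i j * x j)\<^sup>2) = \<bar>c\<bar> * sqrt (\<Sum>i<m. (\<Sum>j<m. A i j * x j)\<^sup>2)"
    by (simp add: real_sqrt_mult)
  also have "\<dots> \<le> \<bar>c\<bar> * spec_norm m A"
    using spec_norm_upper[OF x] by (intro mult_left_mono) auto
  finally show "sqrt (\<Sum>i<m. (\<Sum>j<m. c * A i j * x j)\<^sup>2) \<le> \<bar>c\<bar> * spec_norm m A" .
qed

lemma spec_norm_scale:
  assumes "m \<ge> 1" and "c \<noteq> 0"
  shows "spec_norm m (\<lambda>i j. c * A i j) = \<bar>c\<bar> * spec_norm m A"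
proof (rule antisym)
  have "spec_norm m A = spec_norm m (\<lambda>i j. (1 / c) * (c * A i j))"
    using assms(2) by simp
  also have "\<dots> \<le> \<bar>1 / c\<bar> * spec_norm m (\<lambda>i j. c * A i j)"
    by (rule spec_norm_scale_le[OF assms(1)])
  finally show "\<bar>c\<bar> * spec_norm m A \<le> spec_norm m (\<lambda>i j. c * A i j)"
    using assms(2) by (simp add: abs_divide le_divide_eq mult.commute)
qed (rule spec_norm_scale_le[OF assms(1)])

section \<open>Rescaling Gaussian vectors\<close>

lemma prob_space_std_gauss: "prob_space std_gauss"
  unfolding std_gauss_def by (rule prob_space_normal_density) simp

lemma sets_std_gauss [simp, measurable_cong]: "sets std_gauss = sets borel"
  unfolding std_gauss_def by simp

lemma space_std_gauss [simp]: "space std_gauss = UNIV"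
  unfolding std_gauss_def by simp

lemma distr_std_gauss_divide:
  fixes t :: real
  assumes t: "t > 0"
  shows "distr std_gauss std_gauss (\<lambda>x. x / t)
       = density std_gauss (\<lambda>y. ennreal (t * exp (- (t\<^sup>2 - 1) * y\<^sup>2 / 2)))"
proof (rule measure_eqI)
  fix A assume "A \<in> sets (distr std_gauss std_gauss (\<lambda>x. x / t))"
  then have A[measurable]: "A \<in> sets borel" by simp
  have density_scale: "ennreal t * ennreal (std_normal_density (t * y))
      = ennreal (std_normal_density y) * ennreal (t * exp (- (t\<^sup>2 - 1) * y\<^sup>2 / 2))" for y
  proof -
    have "exp (- (t * y)\<^sup>2 / 2) = exp (- y\<^sup>2 / 2) * exp (- (t\<^sup>2 - 1) * y\<^sup>2 / 2)"
      by (simp add: exp_add[symmetric] power_mult_distrib algebra_simps)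
    then show ?thesis
      using t by (simp add: normal_density_def ennreal_mult'[symmetric] ennreal_mult''[symmetric]
          algebra_simps)
  qed
  have "(\<lambda>x. x / t) -` A \<in> sets borel"
    using measurable_sets[of "\<lambda>x::real. x / t" borel borel A] by simp
  then have "emeasure (distr std_gauss std_gauss (\<lambda>x. x / t)) A
      = (\<integral>\<^sup>+ x. ennreal (std_normal_density x) * indicator A (x / t) \<partial>lborel)"
    unfolding std_gauss_def
    by (subst emeasure_distr, simp, simp, subst emeasure_density)
      (auto intro!: nn_integral_cong split: split_indicator)
  also have "\<dots> = ennreal \<bar>t\<bar>
      * (\<integral>\<^sup>+ y. ennreal (std_normal_density (0 + t * y)) * indicator A ((0 + t * y) / t) \<partial>lborel)"
    using t by (intro nn_integral_real_affine) auto
  also have "\<dots> = (\<integral>\<^sup>+ y. ennreal t * ennreal (std_normal_density (t * y)) * indicator A y \<partial>lborel)"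
    using t by (subst nn_integral_cmult[symmetric]) (auto simp: mult.assoc)
  also have "\<dots> = (\<integral>\<^sup>+ y. ennreal (t * exp (- (t\<^sup>2 - 1) * y\<^sup>2 / 2)) * indicator A y \<partial>std_gauss)"
    unfolding std_gauss_def density_scale by (subst nn_integral_density) (auto simp: mult.assoc)
  also have "\<dots> = emeasure (density std_gauss (\<lambda>y. ennreal (t * exp (- (t\<^sup>2 - 1) * y\<^sup>2 / 2)))) A"
    by (subst emeasure_density) auto
  finally show "emeasure (distr std_gauss std_gauss (\<lambda>x. x / t)) A
      = emeasure (density std_gauss (\<lambda>y. ennreal (t * exp (- (t\<^sup>2 - 1) * y\<^sup>2 / 2)))) A" .
qed simp

lemma PiM_density:
  fixes M :: "'a measure" and h :: "'a \<Rightarrow> ennreal"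
  assumes I: "finite I" and "sigma_finite_measure M" and "sigma_finite_measure (density M h)"
    and h[measurable]: "h \<in> borel_measurable M"
  shows "PiM I (\<lambda>_. density M h) = density (PiM I (\<lambda>_. M)) (\<lambda>x. \<Prod>i\<in>I. h (x i))"
proof -
  interpret M: product_sigma_finite "\<lambda>_. M"
    using assms(2) by (simp add: product_sigma_finite_def)
  interpret N: product_sigma_finite "\<lambda>_. density M h"
    using assms(3) by (simp add: product_sigma_finite_def)
  show ?thesis
  proof (rule N.PiM_eqI[OF I, symmetric])
    show "sets (density (PiM I (\<lambda>_. M)) (\<lambda>x. \<Prod>i\<in>I. h (x i))) = sets (PiM I (\<lambda>_. density M h))"
      by (simp cong: sets_PiM_cong)
  next
    fix E assume "\<And>i. i \<in> I \<Longrightarrow> E i \<in> sets (density M h)"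
    then have E[measurable]: "\<And>i. i \<in> I \<Longrightarrow> E i \<in> sets M" by simp
    have "emeasure (density (PiM I (\<lambda>_. M)) (\<lambda>x. \<Prod>i\<in>I. h (x i))) (Pi\<^sub>E I E)
        = (\<integral>\<^sup>+ x. (\<Prod>i\<in>I. h (x i)) * indicator (Pi\<^sub>E I E) x \<partial>PiM I (\<lambda>_. M))"
      using E I by (intro emeasure_density sets_PiM_I_finite) auto
    also have "\<dots> = (\<integral>\<^sup>+ x. (\<Prod>i\<in>I. h (x i) * indicator (E i) (x i)) \<partial>PiM I (\<lambda>_. M))"
      using I by (intro nn_integral_cong)
        (auto simp: prod.distrib indicator_def space_PiM PiE_def Pi_def extensional_def)
    also have "\<dots> = (\<Prod>i\<in>I. \<integral>\<^sup>+ y. h y * indicator (E i) y \<partial>M)"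
      by (intro M.product_nn_integral_prod I) auto
    also have "\<dots> = (\<Prod>i\<in>I. emeasure (density M h) (E i))"
      by (intro prod.cong refl emeasure_density[symmetric]) auto
    finally show "emeasure (density (PiM I (\<lambda>_. M)) (\<lambda>x. \<Prod>i\<in>I. h (x i))) (Pi\<^sub>E I E)
        = (\<Prod>i\<in>I. emeasure (density M h) (E i))" .
  qed
qed

lemma emeasure_PiM_density_le:
  fixes M :: "'a measure" and h :: "'a \<Rightarrow> ennreal"
  assumes "finite I" and "sigma_finite_measure M" and "sigma_finite_measure (density M h)"
    and h[measurable]: "h \<in> borel_measurable M" and h_le: "\<And>x. x \<in> space M \<Longrightarrow> h x \<le> c"
    and A: "A \<in> sets (PiM I (\<lambda>_. M))"
  shows "emeasure (PiM I (\<lambda>_. density M h)) A \<le> c ^ card I * emeasure (PiM I (\<lambda>_. M)) A"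
proof -
  have "emeasure (PiM I (\<lambda>_. density M h)) A
      = (\<integral>\<^sup>+ x. (\<Prod>i\<in>I. h (x i)) * indicator A x \<partial>PiM I (\<lambda>_. M))"
    using A by (simp add: PiM_density[OF assms(1-4)] emeasure_density)
  also have "\<dots> \<le> (\<integral>\<^sup>+ x. c ^ card I * indicator A x \<partial>PiM I (\<lambda>_. M))"
  proof (intro nn_integral_mono mult_right_mono)
    fix x assume "x \<in> space (PiM I (\<lambda>_. M))"
    then have "(\<Prod>i\<in>I. h (x i)) \<le> (\<Prod>i\<in>I. c)"
      by (intro prod_mono_ennreal h_le) (auto simp: space_PiM)
    then show "(\<Prod>i\<in>I. h (x i)) \<le> c ^ card I"
      by simp
  qed simp
  also have "\<dots> = c ^ card I * emeasure (PiM I (\<lambda>_. M)) A"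
    using A by (simp add: nn_integral_cmult_indicator)
  finally show ?thesis .
qed

lemma scaled_gauss_density_le:
  fixes t y :: real
  assumes "t \<ge> 1"
  shows "t * exp (- (t\<^sup>2 - 1) * y\<^sup>2 / 2) \<le> t"
proof -
  have "(t\<^sup>2 - 1) * y\<^sup>2 \<ge> 0"
    using assms by (simp add: one_le_power)
  then have "exp (- (t\<^sup>2 - 1) * y\<^sup>2 / 2) \<le> 1"
    by (simp only: mult_minus_left) simp
  then show ?thesis
    using assms by (simp add: mult_left_le)
qed

lemma measure_PiM_std_gauss_divide_le:
  fixes t :: real
  assumes I: "finite I" and t: "t \<ge> 1" and E: "E \<in> sets (PiM I (\<lambda>_. std_gauss))"
  shows "measure (PiM I (\<lambda>_. std_gauss))
           (compose I (\<lambda>x. x / t) -` E \<inter> space (PiM I (\<lambda>_. std_gauss)))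
         \<le> t ^ card I * measure (PiM I (\<lambda>_. std_gauss)) E"
proof -
  let ?G = "PiM I (\<lambda>_. std_gauss)"
  define h where "h y = ennreal (t * exp (- (t\<^sup>2 - 1) * y\<^sup>2 / 2))" for y :: real
  interpret G: prob_space ?G
    by (intro prob_space_PiM prob_space_std_gauss)
  have "(\<lambda>x::real. x / t) \<in> measurable std_gauss std_gauss"
    by simp
  moreover have dens: "distr std_gauss std_gauss (\<lambda>x. x / t) = density std_gauss h"
    unfolding h_def using t by (intro distr_std_gauss_divide) simp
  ultimately have "prob_space (density std_gauss h)"
    by (metis prob_space.prob_space_distr prob_space_std_gauss)
  have h_le: "h y \<le> ennreal t" for y
    unfolding h_def using scaled_gauss_density_le[OF t] by (rule ennreal_leI)
  have "h \<in> borel_measurable std_gauss"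
    unfolding h_def by measurable
  have "compose I (\<lambda>x. x / t) \<in> measurable ?G ?G"
    unfolding compose_def by measurable
  then have "emeasure ?G (compose I (\<lambda>x. x / t) -` E \<inter> space ?G)
      = emeasure (distr ?G ?G (compose I (\<lambda>x. x / t))) E"
    using E by (intro emeasure_distr[symmetric]) auto
  also have "\<dots> = emeasure (PiM I (\<lambda>_. density std_gauss h)) E"
    using I by (subst distr_PiM_finite_prob_space') (auto simp: prob_space_std_gauss dens)
  also have "\<dots> \<le> ennreal t ^ card I * emeasure ?G E"
    using I E h_le \<open>prob_space (density std_gauss h)\<close> \<open>h \<in> borel_measurable std_gauss\<close>
    by (intro emeasure_PiM_density_le) (auto simp: prob_space_imp_sigma_finite prob_space_std_gauss)
  also have "\<dots> = ennreal (t ^ card I * measure ?G E)"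
    using t by (simp add: G.emeasure_eq_measure ennreal_power ennreal_mult)
  finally show ?thesis
    using t by (simp add: G.emeasure_eq_measure)
qed

lemma indep_var_PiM_times_bool:
  fixes M :: "'a measure" and I :: "'i set"
  assumes M: "prob_space M" and I: "I \<noteq> {}"
  shows "prob_space.indep_var (PiM (I \<times> UNIV) (\<lambda>_. M))
           (PiM I (\<lambda>_. M)) (\<lambda>\<omega>. \<lambda>i\<in>I. \<omega> (i, False)) (PiM I (\<lambda>_. M)) (\<lambda>\<omega>. \<lambda>i\<in>I. \<omega> (i, True))"
proof -
  let ?K = "I \<times> (UNIV :: bool set)"
  let ?P = "PiM ?K (\<lambda>_. M)" and ?half = "\<lambda>b \<omega>. \<lambda>i\<in>I. \<omega> (i, b)"
  interpret P: prob_space ?P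
    using M by (rule prob_space_PiM)
  have "distr ?P ?P (\<lambda>\<omega>. \<lambda>k\<in>?K. \<omega> k) = distr ?P ?P (\<lambda>\<omega>. \<omega>)"
    by (intro distr_cong) (auto simp: space_PiM PiE_def extensional_restrict)
  also have "\<dots> = ?P"
    by (rule distr_id)
  also have "\<dots> = PiM ?K (\<lambda>k. distr ?P M (\<lambda>\<omega>. \<omega> k))"
    using M by (intro PiM_cong refl distr_PiM_component[symmetric]) auto
  finally have "P.indep_vars (\<lambda>_. M) (\<lambda>k \<omega>. \<omega> k) ?K"
    using I by (subst P.indep_vars_iff_distr_eq_PiM') auto
  then have "P.indep_var (PiM I (\<lambda>_. M)) (?half False \<circ> (\<lambda>\<omega>. \<lambda>k\<in>I \<times> {False}. \<omega> k))
                         (PiM I (\<lambda>_. M)) (?half True \<circ> (\<lambda>\<omega>. \<lambda>k\<in>I \<times> {True}. \<omega> k))"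
    by (intro P.indep_var_compose[OF P.indep_var_restrict]) (auto intro!: measurable_restrict)
  moreover have restrict_half: "?half b \<circ> (\<lambda>\<omega>. \<lambda>k\<in>I \<times> {b}. \<omega> k) = ?half b" for b
    by (auto simp: fun_eq_iff)
  ultimately show ?thesis
    by (simp only: restrict_half)
qed

lemma measure_PiM_times_bool:
  fixes M :: "'a measure" and I :: "'i set"
  assumes M: "prob_space M" and I: "I \<noteq> {}"
    and E: "E \<in> sets (PiM I (\<lambda>_. M))" and F: "F \<in> sets (PiM I (\<lambda>_. M))"
  shows "measure (PiM (I \<times> UNIV) (\<lambda>_. M))
           {w \<in> space (PiM (I \<times> UNIV) (\<lambda>_. M)). (\<lambda>i\<in>I. w (i, False)) \<in> E \<and> (\<lambda>i\<in>I. w (i, True)) \<in> F}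
         = measure (PiM I (\<lambda>_. M)) E * measure (PiM I (\<lambda>_. M)) F"
proof -
  let ?P = "PiM (I \<times> UNIV) (\<lambda>_. M)" and ?Q = "PiM I (\<lambda>_. M)"
  let ?half = "\<lambda>b \<omega>. \<lambda>i\<in>I. \<omega> (i, b)"
  interpret P: prob_space ?P
    using M by (rule prob_space_PiM)
  have "P.prob ((\<lambda>\<omega>. (?half False \<omega>, ?half True \<omega>)) -` (E \<times> F) \<inter> space ?P)
      = P.prob (?half False -` E \<inter> space ?P) * P.prob (?half True -` F \<inter> space ?P)"
    using E F by (rule P.indep_varD[OF indep_var_PiM_times_bool[OF M I]])
  moreover have marginal: "P.prob (?half b -` A \<inter> space ?P) = measure ?Q A" if "A \<in> sets ?Q" for b A
  proof -
    have "distr ?P ?Q (?half b) = ?Q"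
      using distr_PiM_reindex[of "I \<times> UNIV" "\<lambda>_. M" "\<lambda>i. (i, b)" I] M by (simp add: inj_on_def)
    moreover have "?half b \<in> measurable ?P ?Q"
      by measurable
    ultimately show ?thesis
      using that by (metis measure_distr)
  qed
  moreover have "(\<lambda>\<omega>. (?half False \<omega>, ?half True \<omega>)) -` (E \<times> F) \<inter> space ?P
      = {w \<in> space ?P. ?half False w \<in> E \<and> ?half True w \<in> F}"
    by auto
  ultimately show ?thesis
    by (simp add: marginal[OF E] marginal[OF F])
qed

section \<open>Small-ball events of GOE matrices\<close>

lemma prob_space_goe_space: "prob_space (goe_space m)"
  unfolding goe_space_def by (intro prob_space_PiM prob_space_std_gauss)

lemma finite_goe_idx: "finite (goe_idx m)"
  by (rule finite_subset[of _ "{..<m} \<times> {..<m}"]) (auto simp: goe_idx_def)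

lemma card_goe_idx_le: "card (goe_idx m) \<le> m * m"
proof -
  have "card (goe_idx m) \<le> card ({..<m} \<times> {..<m})"
    by (intro card_mono) (auto simp: goe_idx_def)
  then show ?thesis
    by (simp add: card_cartesian_product)
qed

lemma sym_of_eq: "sym_of g i j = g (min i j, max i j)"
  by (simp add: sym_of_def min_def max_def)

lemma min_max_in_goe_idx: "i < m \<Longrightarrow> j < m \<Longrightarrow> (min i j, max i j) \<in> goe_idx m"
  by (simp add: goe_idx_def)

definition goe_small_set :: "nat \<Rightarrow> real \<Rightarrow> (nat \<times> nat \<Rightarrow> real) set" where
  "goe_small_set m d = {z \<in> space (goe_space m). spec_norm m (goe_mat z) \<le> d}"

lemma goe_small_prob_eq: "goe_small_prob m d = measure (goe_space m) (goe_small_set m d)"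
  by (simp add: goe_small_prob_def goe_small_set_def)

text \<open>Measurability of the event is not proved directly: a non-measurable set has measure 0 by
  convention, so a positive probability certifies it.\<close>
lemma sets_goe_small_set: "goe_small_prob m d > 0 \<Longrightarrow> goe_small_set m d \<in> sets (goe_space m)"
  unfolding goe_small_prob_eq using measure_notin_sets by fastforce

lemma measurable_goe_divide:
  "compose (goe_idx m) (\<lambda>x. x / t) \<in> measurable (goe_space m) (goe_space m)"
  unfolding goe_space_def compose_def by measurable

lemma goe_small_set_mult:
  assumes m: "m \<ge> 1" and t: "t > 0"
  shows "goe_small_set m (t * d)
       = compose (goe_idx m) (\<lambda>x. x / t) -` goe_small_set m d \<inter> space (goe_space m)"
proof -
  have "spec_norm m (goe_mat (compose (goe_idx m) (\<lambda>x. x / t) z)) = spec_norm m (goe_mat z) / t" for z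
  proof -
    have "spec_norm m (goe_mat (compose (goe_idx m) (\<lambda>x. x / t) z))
        = spec_norm m (\<lambda>i j. (1 / t) * goe_mat z i j)"
      by (intro spec_norm_cong)
        (simp add: goe_mat_def sym_of_eq min_max_in_goe_idx compose_def)
    also have "\<dots> = spec_norm m (goe_mat z) / t"
      using spec_norm_scale[OF m, of "1 / t"] t by simp
    finally show ?thesis .
  qed
  then show ?thesis
    using measurable_space[OF measurable_goe_divide] t
    by (auto simp: goe_small_set_def pos_divide_le_eq mult.commute)
qed

lemma goe_small_prob_mult_le:
  assumes m: "m \<ge> 1" and t: "t \<ge> 1" and E: "goe_small_set m d \<in> sets (goe_space m)"
  shows "goe_small_prob m (t * d) \<le> t ^ card (goe_idx m) * goe_small_prob m d"
  using measure_PiM_std_gauss_divide_le[OF finite_goe_idx t E[unfolded goe_space_def]] m t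
  by (simp add: goe_small_prob_eq goe_small_set_mult goe_space_def)

definition goe_half :: "nat \<Rightarrow> bool \<Rightarrow> ((nat \<times> nat) \<times> bool \<Rightarrow> real) \<Rightarrow> nat \<times> nat \<Rightarrow> real" where
  "goe_half m b w = (\<lambda>p\<in>goe_idx m. w (p, b))"

lemma goe_half_measurable: "goe_half m b \<in> measurable (goe_pair_space m) (goe_space m)"
  unfolding goe_half_def goe_pair_space_def goe_space_def by measurable

lemma corr_X_eq:
  "i < m \<Longrightarrow> j < m \<Longrightarrow> corr_X w i j = goe_mat (goe_half m False w) i j"
  by (simp add: corr_X_def goe_mat_def goe_half_def sym_of_eq min_max_in_goe_idx)

lemma corr_Y_eq:
  "i < m \<Longrightarrow> j < m \<Longrightarrow> corr_Y \<rho> w i j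
     = \<rho> * goe_mat (goe_half m False w) i j + sqrt (1 - \<rho>\<^sup>2) * goe_mat (goe_half m True w) i j"
  by (simp add: corr_Y_def goe_mat_def goe_half_def sym_of_eq min_max_in_goe_idx algebra_simps)

lemma goe_pair_small_prob_le_product:
  assumes m: "m \<ge> 1" and E: "E \<in> sets (goe_space m)" and F: "F \<in> sets (goe_space m)"
    and EF: "\<And>w. spec_norm m (corr_X w) \<le> d \<Longrightarrow> spec_norm m (corr_Y \<rho> w) \<le> d
               \<Longrightarrow> goe_half m False w \<in> E \<and> goe_half m True w \<in> F"
  shows "goe_pair_small_prob m \<rho> d \<le> measure (goe_space m) E * measure (goe_space m) F"
proof -
  let ?P = "goe_pair_space m"
  interpret P: prob_space ?P
    unfolding goe_pair_space_def by (intro prob_space_PiM prob_space_std_gauss)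
  have "{w \<in> space ?P. goe_half m False w \<in> E \<and> goe_half m True w \<in> F}
      = (goe_half m False -` E \<inter> space ?P) \<inter> (goe_half m True -` F \<inter> space ?P)"
    by auto
  also have "\<dots> \<in> P.events"
    using measurable_sets[OF goe_half_measurable E] measurable_sets[OF goe_half_measurable F] by auto
  finally have "goe_pair_small_prob m \<rho> d
      \<le> measure ?P {w \<in> space ?P. goe_half m False w \<in> E \<and> goe_half m True w \<in> F}"
    unfolding goe_pair_small_prob_def using EF by (intro P.finite_measure_mono) auto
  also have "\<dots> = measure (goe_space m) E * measure (goe_space m) F"
  proof -
    have "(0, 0) \<in> goe_idx m"
      using m by (simp add: goe_idx_def)
    then have "goe_idx m \<noteq> {}"
      by blast
    then show ?thesis
      using E F measure_PiM_times_bool[OF prob_space_std_gauss, of "goe_idx m" E F]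
      by (simp add: goe_half_def goe_pair_space_def goe_space_def)
  qed
  finally show ?thesis .
qed

lemma goe_half_in_space: "goe_half m b w \<in> space (goe_space m)"
  by (simp add: goe_half_def goe_space_def space_PiM)

lemma goe_pair_small_prob_le:
  assumes m: "m \<ge> 1" and E: "goe_small_set m d \<in> sets (goe_space m)"
  shows "goe_pair_small_prob m \<rho> d \<le> goe_small_prob m d"
proof -
  have "goe_pair_small_prob m \<rho> d
      \<le> measure (goe_space m) (goe_small_set m d) * measure (goe_space m) (space (goe_space m))"
  proof (rule goe_pair_small_prob_le_product[OF m E sets.top])
    fix w assume "spec_norm m (corr_X w) \<le> d"
    moreover have "spec_norm m (corr_X w) = spec_norm m (goe_mat (goe_half m False w))"
      by (intro spec_norm_cong corr_X_eq)
    ultimately show "goe_half m False w \<in> goe_small_set m d \<and> goe_half m True w \<in> space (goe_space m)"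
      by (simp add: goe_small_set_def goe_half_in_space)
  qed
  then show ?thesis
    by (simp add: goe_small_prob_eq prob_space.prob_space[OF prob_space_goe_space])
qed

lemma abs_one_minus_two_div:
  assumes "0 < k" "k < n"
  shows "\<bar>1 - 2 * real k / real n\<bar> = 1 - 2 * real (min k (n - k)) / real n"
proof (cases "2 * k \<le> n")
  case True
  then have "2 * real k / real n \<le> 1"
    using assms by (simp add: divide_le_eq)
  then show ?thesis
    using True by simp
next
  case False
  then have "2 * real k / real n > 1"
    using assms by (simp add: less_divide_eq)
  then show ?thesis
    using False assms by (simp add: of_nat_diff diff_divide_distrib)
qed

lemma one_plus_abs_div_sqrt_eq:
  fixes \<rho> :: real
  assumes \<rho>: "\<bar>\<rho>\<bar> < 1"
  shows "(1 + \<bar>\<rho>\<bar>) / sqrt (1 - \<rho>\<^sup>2) = sqrt ((1 + \<bar>\<rho>\<bar>) / (1 - \<bar>\<rho>\<bar>))"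
proof -
  define t where "t = (1 + \<bar>\<rho>\<bar>) / sqrt (1 - \<rho>\<^sup>2)"
  have "1 - \<rho>\<^sup>2 = (1 - \<bar>\<rho>\<bar>) * (1 + \<bar>\<rho>\<bar>)"
    by (simp add: power2_eq_square algebra_simps)
  then have "t\<^sup>2 = (1 + \<bar>\<rho>\<bar>)\<^sup>2 / ((1 - \<bar>\<rho>\<bar>) * (1 + \<bar>\<rho>\<bar>))"
    using \<rho> by (simp add: t_def power_divide abs_square_less_1)
  also have "\<dots> = (1 + \<bar>\<rho>\<bar>) / (1 - \<bar>\<rho>\<bar>)"
    by (simp add: power2_eq_square)
  finally have "sqrt ((1 + \<bar>\<rho>\<bar>) / (1 - \<bar>\<rho>\<bar>)) = \<bar>t\<bar>"
    by (simp flip: real_sqrt_abs)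
  moreover have "0 \<le> t"
    unfolding t_def using \<rho> by (intro divide_nonneg_nonneg) (auto simp: abs_square_less_1 less_imp_le)
  ultimately show ?thesis
    by (metis abs_of_nonneg t_def)
qed

lemma goe_pair_small_prob_le_square:
  assumes m: "m \<ge> 1" and \<rho>: "\<bar>\<rho>\<bar> < 1" and E: "goe_small_set m d \<in> sets (goe_space m)"
  shows "goe_pair_small_prob m \<rho> d
       \<le> sqrt ((1 + \<bar>\<rho>\<bar>) / (1 - \<bar>\<rho>\<bar>)) ^ card (goe_idx m) * (goe_small_prob m d)\<^sup>2"
proof -
  define s where "s = sqrt (1 - \<rho>\<^sup>2)"
  define t where "t = (1 + \<bar>\<rho>\<bar>) / s"
  have s: "0 < s" "s \<le> 1"
    using \<rho> by (auto simp: s_def abs_square_less_1)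
  then have t: "t \<ge> 1"
    by (simp add: t_def)
  have F: "goe_small_set m (t * d) \<in> sets (goe_space m)"
    using t goe_small_set_mult[OF m] measurable_sets[OF measurable_goe_divide E] by simp
  have "goe_pair_small_prob m \<rho> d
      \<le> measure (goe_space m) (goe_small_set m d) * measure (goe_space m) (goe_small_set m (t * d))"
  proof (rule goe_pair_small_prob_le_product[OF m E F])
    fix w assume X: "spec_norm m (corr_X w) \<le> d" and Y: "spec_norm m (corr_Y \<rho> w) \<le> d"
    let ?X = "corr_X w" and ?Y = "corr_Y \<rho> w"
    have "spec_norm m (goe_mat (goe_half m True w))
        = spec_norm m (\<lambda>i j. (1 / s) * (?Y i j + (- \<rho>) * ?X i j))"
      using s by (intro spec_norm_cong) (simp add: corr_X_eq corr_Y_eq s_def[symmetric])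
    also have "\<dots> \<le> (1 / s) * spec_norm m (\<lambda>i j. ?Y i j + (- \<rho>) * ?X i j)"
      using spec_norm_scale_le[OF m, of "1 / s"] s by simp
    also have "\<dots> \<le> (1 / s) * (spec_norm m ?Y + spec_norm m (\<lambda>i j. (- \<rho>) * ?X i j))"
      using s by (intro mult_left_mono[OF spec_norm_add_le[OF m]]) simp
    also have "\<dots> \<le> (1 / s) * (d + \<bar>\<rho>\<bar> * d)"
      using spec_norm_scale_le[OF m, of "- \<rho>" ?X] mult_left_mono[OF X, of "\<bar>\<rho>\<bar>"] Y s
      by (intro mult_left_mono) auto
    also have "\<dots> = t * d"
      by (simp add: t_def add_divide_distrib algebra_simps)
    finally show "goe_half m False w \<in> goe_small_set m d \<and> goe_half m True w \<in> goe_small_set m (t * d)"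
      using X by (simp add: goe_small_set_def goe_half_in_space spec_norm_cong[OF corr_X_eq])
  qed
  also have "\<dots> \<le> goe_small_prob m d * (t ^ card (goe_idx m) * goe_small_prob m d)"
    using goe_small_prob_mult_le[OF m t E] by (simp add: goe_small_prob_eq mult_left_mono)
  finally show ?thesis
    using one_plus_abs_div_sqrt_eq[OF \<rho>] by (simp add: t_def s_def power2_eq_square mult_ac)
qed

lemma R_ratio_nonneg: "R_ratio m n k d \<ge> 0"
  by (simp add: R_ratio_def goe_pair_small_prob_def)

lemma R_ratio_le_inverse:
  assumes m: "m \<ge> 1" and P: "goe_small_prob m d > 0"
  shows "R_ratio m n k d \<le> 1 / goe_small_prob m d"
proof -
  have "R_ratio m n k d \<le> goe_small_prob m d / (goe_small_prob m d)\<^sup>2"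
    unfolding R_ratio_def
    using goe_pair_small_prob_le[OF m sets_goe_small_set[OF P]] by (intro divide_right_mono) auto
  then show ?thesis
    using P by (simp add: power2_eq_square)
qed

lemma R_ratio_le_powr:
  assumes m: "m \<ge> 1" and P: "goe_small_prob m d > 0" and k: "0 < k" "k < n"
  shows "R_ratio m n k d \<le> (real n / real (min k (n - k))) powr (real m ^ 2 / 2)"
proof -
  define \<rho> where "\<rho> = 1 - 2 * real k / real n"
  define j where "j = min k (n - k)"
  define r where "r = (1 + \<bar>\<rho>\<bar>) / (1 - \<bar>\<rho>\<bar>)"
  have j: "0 < j" "2 * j \<le> n"
    using k by (auto simp: j_def)
  have abs_\<rho>: "\<bar>\<rho>\<bar> = 1 - 2 * real j / real n"
    unfolding \<rho>_def j_def by (rule abs_one_minus_two_div[OF k])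
  then have \<rho>: "\<bar>\<rho>\<bar> < 1"
    using j by simp
  then have r: "1 \<le> r"
    by (simp add: r_def)
  have "R_ratio m n k d \<le> sqrt r ^ card (goe_idx m) * (goe_small_prob m d)\<^sup>2 / (goe_small_prob m d)\<^sup>2"
    unfolding R_ratio_def \<rho>_def[symmetric] r_def
    using goe_pair_small_prob_le_square[OF m \<rho> sets_goe_small_set[OF P]] by (intro divide_right_mono) auto
  also have "\<dots> = sqrt r ^ card (goe_idx m)"
    using P by simp
  also have "\<dots> \<le> sqrt r ^ (m * m)"
    using r card_goe_idx_le by (intro power_increasing) auto
  also have "\<dots> = (r powr (1 / 2)) powr real (m * m)"
    using r by (subst powr_realpow) (auto simp: powr_half_sqrt)
  also have "\<dots> = r powr (real m ^ 2 / 2)"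
    by (simp add: powr_powr power2_eq_square)
  also have "\<dots> \<le> (real n / real j) powr (real m ^ 2 / 2)"
    using j r by (intro powr_mono2) (auto simp: r_def abs_\<rho> field_simps)
  finally show ?thesis
    by (simp add: j_def)
qed

section \<open>Binomial sums\<close>

lemma binomial_le_exp_power:
  assumes j: "0 < j" "j \<le> n"
  shows "real (n choose j) \<le> (exp 1 * real n / real j) ^ j"
proof -
  define x where "x = real j / real n"
  have x: "x > 0"
    using j by (simp add: x_def)
  have "real (n choose j) * x ^ j \<le> (\<Sum>k\<le>n. real (n choose k) * x ^ k)"
    using j x by (intro member_le_sum[where f = "\<lambda>k. real (n choose k) * x ^ k"]) auto
  also have "\<dots> = (x + 1) ^ n"
    using binomial_ring[of x 1 n] by simp
  also have "\<dots> \<le> exp x ^ n"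
    using x by (intro power_mono) (auto simp: add.commute[of x] exp_ge_add_one_self)
  also have "\<dots> = exp (real j)"
    using j by (simp add: x_def exp_of_nat_mult[symmetric])
  finally have "real (n choose j) \<le> exp (real j) / x ^ j"
    using x by (simp add: field_simps)
  also have "\<dots> = (exp 1 * real n / real j) ^ j"
    using j by (simp add: x_def power_divide power_mult_distrib exp_of_nat_mult[symmetric])
  finally show ?thesis .
qed

lemma sum_binomial_le_power:
  fixes x :: real
  assumes x: "0 < x" "x \<le> 1" and J: "J \<le> n"
  shows "(\<Sum>j\<le>J. real (n choose j)) \<le> (1 + x) ^ n / x ^ J"
proof -
  have "(\<Sum>j\<le>J. real (n choose j)) \<le> (\<Sum>j\<le>J. real (n choose j) * x ^ j / x ^ J)"
    using x by (intro sum_mono) (auto simp: le_divide_eq intro!: mult_left_mono power_decreasing)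
  also have "\<dots> \<le> (\<Sum>j\<le>n. real (n choose j) * x ^ j) / x ^ J"
    using x J by (simp add: sum_divide_distrib[symmetric] divide_right_mono sum_mono2)
  also have "\<dots> = (1 + x) ^ n / x ^ J"
    using binomial_ring[of x 1 n] by (simp add: add.commute)
  finally show ?thesis .
qed

lemma sum_binomial_quarter_le:
  assumes "4 * J \<le> n"
  shows "(\<Sum>j\<le>J. real (n choose j)) \<le> exp (real n * (2 * ln 2 - 3 / 4 * ln 3))"
proof -
  have "(\<Sum>j\<le>J. real (n choose j)) \<le> (1 + 1 / 3) ^ n / (1 / 3) ^ J"
    using assms by (intro sum_binomial_le_power) auto
  also have "\<dots> = exp (real n * ln (4 / 3) + real J * ln 3)"
    by (simp add: exp_add exp_of_nat_mult power_one_over)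
  also have "\<dots> \<le> exp (real n * ln (4 / 3) + real n / 4 * ln 3)"
    using assms by simp
  also have "ln (4 / 3 :: real) = 2 * ln 2 - ln 3"
    using ln_div[of 4 3] ln_realpow[of 2 2] by simp
  finally show ?thesis
    by (simp add: algebra_simps)
qed

lemma ex_ln_mult_ln_div_less:
  fixes \<epsilon> :: real
  assumes "\<epsilon> > 0"
  shows "\<exists>U \<ge> 2. \<forall>u \<ge> U. ln (2 * exp 1 * u) * ln u / u < \<epsilon>"
proof -
  have "((\<lambda>u::real. ln (2 * exp 1 * u) * ln u / u) \<longlongrightarrow> 0) at_top"
    by real_asymp
  then have "\<forall>\<^sub>F u in at_top. ln (2 * exp 1 * u) * ln u / u < \<epsilon>"
    using assms by (intro order_tendstoD(2)) auto
  then show ?thesis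
    unfolding eventually_at_top_linorder by (metis max.cobounded1 max.cobounded2 order_trans)
qed

lemma eventually_mult_ln_le:
  fixes a :: "nat \<Rightarrow> real"
  assumes a: "(\<lambda>n. a n / real n) \<longlonglongrightarrow> 0" and c: "c > 0" and \<kappa>: "\<kappa> > 0"
  shows "\<forall>\<^sub>F n in sequentially. \<forall>j. 0 < j \<longrightarrow> j \<le> n
           \<longrightarrow> c * a n \<le> 2 * real j * ln (2 * exp 1 * (real n / real j))
           \<longrightarrow> a n * ln (real n / real j) \<le> \<kappa> * real n"
proof -
  obtain U where U: "U \<ge> 2" "\<And>u. u \<ge> U \<Longrightarrow> ln (2 * exp 1 * u) * ln u / u < c * \<kappa> / 2"
    using ex_ln_mult_ln_div_less[of "c * \<kappa> / 2"] c \<kappa> by auto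
  then have "ln U > 0"
    by simp
  then have "\<forall>\<^sub>F n in sequentially. a n / real n < \<kappa> / ln U"
    using order_tendstoD(2)[OF a] \<kappa> by simp
  then show ?thesis
  proof (rule eventually_mono, safe)
    fix n j :: nat
    assume a_n: "a n / real n < \<kappa> / ln U" and j: "0 < j" "j \<le> n"
      and a_le: "c * a n \<le> 2 * real j * ln (2 * exp 1 * (real n / real j))"
    define u where "u = real n / real j"
    have u: "u \<ge> 1" "ln u \<ge> 0"
      using j by (simp_all add: u_def)
    consider "a n \<le> 0" | "0 < a n" "u \<le> U" | "U < u"
      by fastforce
    then show "a n * ln u \<le> \<kappa> * real n"
    proof cases
      case 1
      then show ?thesis
        using mult_nonpos_nonneg[OF 1 u(2)] \<kappa> by (simp add: order_trans)
    next
      case 2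
      then have "a n * ln u \<le> a n * ln U"
        using u by (intro mult_left_mono) auto
      also have "\<dots> \<le> \<kappa> * real n"
        using a_n j \<open>ln U > 0\<close> by (simp add: field_simps)
      finally show ?thesis .
    next
      case 3
      have "c * (a n * ln u) \<le> 2 * real j * ln (2 * exp 1 * u) * ln u"
        using a_le u by (simp add: u_def mult.assoc[symmetric] mult_right_mono)
      also have "\<dots> = 2 * real n * (ln (2 * exp 1 * u) * ln u / u)"
        using j by (simp add: u_def)
      also have "\<dots> \<le> 2 * real n * (c * \<kappa> / 2)"
        using U(2)[of u] 3 by (intro mult_left_mono) auto
      finally show ?thesis
        using c by (simp add: mult.commute)
    qed
  qed
qed

lemma binomial_gt_imp_less_mult_ln:
  assumes j: "0 < j" "j \<le> n" and gt: "exp (b / 2) * (1 / 2) ^ j < real (n choose j)"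
  shows "b / 2 < real j * ln (2 * exp 1 * (real n / real j))"
proof -
  have "exp (b / 2) * (1 / 2) ^ j < (exp 1 * real n / real j) ^ j"
    using gt binomial_le_exp_power[OF j] by simp
  then have "exp (b / 2) < (2 * exp 1 * (real n / real j)) ^ j"
    by (simp add: power_mult_distrib field_simps)
  moreover have "2 * exp 1 * (real n / real j) > 0"
    using j by simp
  ultimately have "ln (exp (b / 2)) < ln ((2 * exp 1 * (real n / real j)) ^ j)"
    by (subst ln_less_cancel_iff) auto
  then show ?thesis
    using \<open>2 * exp 1 * (real n / real j) > 0\<close> by (simp add: ln_realpow)
qed

lemma binomial_mult_le:
  fixes n j :: nat and a b r :: real
  assumes b: "0 \<le> b" and r: "0 \<le> r" "r \<le> 2 ^ n * exp (- b)"
    and r_powr: "0 < j \<Longrightarrow> r \<le> (real n / real j) powr (a / 2)"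
    and exponent: "0 < j \<Longrightarrow> b \<le> 2 * real j * ln (2 * exp 1 * (real n / real j))
                     \<Longrightarrow> a * ln (real n / real j) \<le> ln 2 / 4 * real n"
    and j: "j \<le> n"
  shows "real (n choose j) * r \<le> 2 ^ n * exp (- b / 2) * (1 / 2) ^ j + real (n choose j) * 2 powr (real n / 8)"
proof (cases "real (n choose j) \<le> exp (b / 2) * (1 / 2) ^ j")
  case True
  have "real (n choose j) * r \<le> exp (b / 2) * (1 / 2) ^ j * (2 ^ n * exp (- b))"
    using True r by (intro mult_mono) auto
  also have "\<dots> = 2 ^ n * exp (- b / 2) * (1 / 2) ^ j"
    by (simp add: mult_exp_exp)
  finally show ?thesis
    by (simp add: add_increasing2)
next
  case False
  have j_pos: "0 < j"
  proof (rule ccontr)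
    assume "\<not> 0 < j"
    then show False
      using False b by simp
  qed
  have "b / 2 < real j * ln (2 * exp 1 * (real n / real j))"
    using False binomial_gt_imp_less_mult_ln[OF j_pos j] by simp
  then have "a * ln (real n / real j) \<le> ln 2 / 4 * real n"
    using exponent[OF j_pos] by simp
  have "r \<le> (real n / real j) powr (a / 2)"
    by (rule r_powr[OF j_pos])
  also have "\<dots> = exp (a / 2 * ln (real n / real j))"
    using j_pos j by (simp add: powr_def)
  also have "\<dots> \<le> exp (real n / 8 * ln 2)"
    using \<open>a * ln (real n / real j) \<le> ln 2 / 4 * real n\<close> by (simp add: mult_ac)
  also have "\<dots> = 2 powr (real n / 8)"
    by (simp add: powr_def)
  finally have "real (n choose j) * r \<le> real (n choose j) * 2 powr (real n / 8)"
    by (simp add: mult_left_mono)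
  then show ?thesis
    by (simp add: add_increasing)
qed

lemma le_nat_floor_quarter_iff: "j \<le> nat \<lfloor>real n / 4\<rfloor> \<longleftrightarrow> 4 * j \<le> n"
  by linarith

lemma ln_two_ln_three_less: "9 / 8 * ln 2 < 3 / 4 * ln (3 :: real)"
proof -
  have "ln (2 ^ 9 :: real) < ln (3 ^ 6)"
    by simp
  then have "9 * ln (2 :: real) < 6 * ln 3"
    by (simp only: ln_realpow)
  then show ?thesis
    by simp
qed

lemma binomial_weighted_sum_le:
  fixes n :: nat and a b :: real and r :: "nat \<Rightarrow> real"
  assumes b: "0 \<le> b"
    and r: "\<And>j. 4 * j \<le> n \<Longrightarrow> 0 \<le> r j \<and> r j \<le> 2 ^ n * exp (- b)"
    and r_powr: "\<And>j. 0 < j \<Longrightarrow> 4 * j \<le> n \<Longrightarrow> r j \<le> (real n / real j) powr (a / 2)"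
    and exponent: "\<And>j. 0 < j \<Longrightarrow> j \<le> n \<Longrightarrow> b \<le> 2 * real j * ln (2 * exp 1 * (real n / real j))
                     \<Longrightarrow> a * ln (real n / real j) \<le> ln 2 / 4 * real n"
  shows "2 powr (- real n) * (\<Sum>j \<in> {0..nat \<lfloor>real n / 4\<rfloor>}. real (n choose j) * r j)
       \<le> 2 * exp (- b / 2) + exp (9 / 8 * ln 2 - 3 / 4 * ln 3) ^ n"
proof -
  define J where "J = nat \<lfloor>real n / 4\<rfloor>"
  have J: "4 * J \<le> n"
    using le_nat_floor_quarter_iff[of J n] by (simp add: J_def)
  have "(\<Sum>j \<in> {0..J}. real (n choose j) * r j)
      \<le> (\<Sum>j \<in> {0..J}. 2 ^ n * exp (- b / 2) * (1 / 2) ^ j + real (n choose j) * 2 powr (real n / 8))"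
    using J b r r_powr exponent by (intro sum_mono binomial_mult_le[where a = a]) auto
  also have "\<dots> = 2 ^ n * exp (- b / 2) * (\<Sum>j\<le>J. (1 / 2) ^ j)
      + 2 powr (real n / 8) * (\<Sum>j\<le>J. real (n choose j))"
    by (simp add: atLeast0AtMost sum.distrib sum_distrib_left sum_distrib_right mult_ac)
  also have "\<dots> \<le> 2 ^ n * exp (- b / 2) * 2 + 2 powr (real n / 8) * exp (real n * (2 * ln 2 - 3 / 4 * ln 3))"
  proof (intro add_mono mult_left_mono sum_binomial_quarter_le J)
    show "(\<Sum>j\<le>J. (1 / 2 :: real) ^ j) \<le> 2"
      using sum_le_suminf[OF summable_geometric[of "1 / 2 :: real"], of "{..J}"]
      by (simp add: suminf_geometric)
  qed auto
  finally have "2 powr (- real n) * (\<Sum>j \<in> {0..J}. real (n choose j) * r j)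
      \<le> 2 powr (- real n) * (2 ^ n * exp (- b / 2) * 2
        + 2 powr (real n / 8) * exp (real n * (2 * ln 2 - 3 / 4 * ln 3)))"
    by (simp add: mult_left_mono)
  also have "\<dots> = 2 * exp (- b / 2) + exp (9 / 8 * ln 2 - 3 / 4 * ln 3) ^ n"
    by (simp add: powr_def exp_of_nat_mult[symmetric] powr_realpow[symmetric] exp_add[symmetric]
        algebra_simps)
  finally show ?thesis
    by (simp add: J_def)
qed

lemma binomial_weighted_sum_tendsto_0:
  fixes a :: "nat \<Rightarrow> real" and r :: "nat \<Rightarrow> nat \<Rightarrow> real"
  assumes a: "(\<lambda>n. a n / real n) \<longlonglongrightarrow> 0" and a_inf: "filterlim a at_top sequentially"
    and c: "c > 0"
    and r: "\<forall>\<^sub>F n in sequentially. \<forall>j. 4 * j \<le> n \<longrightarrow> 0 \<le> r n j \<and> r n j \<le> 2 ^ n * exp (- c * a n)"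
    and r_powr: "\<forall>\<^sub>F n in sequentially. \<forall>j. 0 < j \<longrightarrow> 4 * j \<le> n
                   \<longrightarrow> r n j \<le> (real n / real j) powr (a n / 2)"
  shows "(\<lambda>n. 2 powr (- real n) * (\<Sum>j \<in> {0..nat \<lfloor>real n / 4\<rfloor>}. real (n choose j) * r n j)) \<longlonglongrightarrow> 0"
proof (rule tendsto_sandwich[OF _ _ tendsto_const])
  have ca: "filterlim (\<lambda>n. c * a n) at_top sequentially"
    by (rule filterlim_tendsto_pos_mult_at_top[OF tendsto_const c a_inf])
  have "ln 2 / 4 > (0 :: real)"
    by simp
  show "\<forall>\<^sub>F n in sequentially. 0 \<le> 2 powr (- real n) * (\<Sum>j \<in> {0..nat \<lfloor>real n / 4\<rfloor>}. real (n choose j) * r n j)"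
    using r by eventually_elim (auto intro!: mult_nonneg_nonneg sum_nonneg simp: le_nat_floor_quarter_iff)
  show "\<forall>\<^sub>F n in sequentially. 2 powr (- real n) * (\<Sum>j \<in> {0..nat \<lfloor>real n / 4\<rfloor>}. real (n choose j) * r n j)
      \<le> 2 * exp (- (c * a n) / 2) + exp (9 / 8 * ln 2 - 3 / 4 * ln 3) ^ n"
    using r r_powr eventually_mult_ln_le[OF a c \<open>ln 2 / 4 > 0\<close>]
      filterlim_at_top[THEN iffD1, OF ca, rule_format, of 0]
  proof eventually_elim
    case (elim n)
    show ?case
      by (rule binomial_weighted_sum_le[where a = "a n"]) (use elim in simp_all)
  qed
  have "filterlim (\<lambda>n. - (c / 2 * a n)) at_bot sequentially"
    using filterlim_tendsto_pos_mult_at_top[OF tendsto_const _ a_inf, of "c / 2"] c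
    by (simp add: filterlim_uminus_at_top)
  then have "(\<lambda>n. exp (- (c * a n) / 2)) \<longlonglongrightarrow> 0"
    using filterlim_compose[OF exp_at_bot] by simp
  moreover have "(\<lambda>n. exp (9 / 8 * ln 2 - 3 / 4 * ln 3 :: real) ^ n) \<longlonglongrightarrow> 0"
    using ln_two_ln_three_less by (intro LIMSEQ_power_zero) simp
  ultimately show "(\<lambda>n. 2 * exp (- (c * a n) / 2) + exp (9 / 8 * ln 2 - 3 / 4 * ln 3) ^ n) \<longlonglongrightarrow> 0"
    using tendsto_add[OF tendsto_mult_right_zero] by simp
qed

section \<open>The tails of the second moment\<close>

lemma small_ball_radius_powr:
  fixes m \<xi> \<gamma> x :: real
  assumes m: "m > 0" and \<gamma>: "\<gamma> > 0" and \<xi>: "\<xi> \<noteq> 0"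
  shows "(exp (3 / 4) / (2 * sqrt m) * (\<gamma> * 2 * exp (- 3 / 4) * sqrt m * 4 powr (- \<xi> * x / m ^ 2)))
           powr (m ^ 2 / (2 * \<xi>))
       = 2 powr (- x) * \<gamma> powr (m ^ 2 / (2 * \<xi>))"
proof -
  have "exp (3 / 4) / (2 * sqrt m) * (\<gamma> * 2 * exp (- 3 / 4) * sqrt m * 4 powr (- \<xi> * x / m ^ 2))
      = \<gamma> * 4 powr (- \<xi> * x / m ^ 2)"
    using m by (simp add: exp_minus field_simps)
  moreover have "(4 powr (- \<xi> * x / m ^ 2)) powr (m ^ 2 / (2 * \<xi>)) = 2 powr (- x)"
  proof -
    have "(4 :: real) powr y = 2 powr (2 * y)" for y
      using powr_powr[of 2 2 y] by simp
    then show ?thesis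
      using m \<xi> by (simp add: powr_powr)
  qed
  ultimately show ?thesis
    using \<gamma> by (simp add: powr_mult mult.commute)
qed

lemma goe_small_prob_lower_bound:
  fixes m n :: nat and \<gamma> \<xi> d :: real
  assumes m: "m \<ge> 1" and \<gamma>: "\<gamma> > 1" and \<xi>: "0 < \<xi>" "\<xi> < 2"
    and d: "d = \<gamma> * 2 * exp (- 3 / 4) * sqrt (real m) * 4 powr (- \<xi> * real n / real m ^ 2)"
    and P: "goe_small_prob m d = (exp (3 / 4) / (2 * sqrt (real m)) * d) powr (real m ^ 2 / (2 * \<xi>))"
  shows "goe_small_prob m d \<ge> 2 powr (- real n) * exp (ln \<gamma> / 4 * real m ^ 2)"
proof -
  have "ln \<gamma> / 4 \<le> ln \<gamma> / (2 * \<xi>)"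
    using \<gamma> \<xi> by (intro divide_left_mono) auto
  then have "ln \<gamma> / 4 * real m ^ 2 \<le> ln \<gamma> / (2 * \<xi>) * real m ^ 2"
    by (rule mult_right_mono) simp
  moreover have "goe_small_prob m d = 2 powr (- real n) * \<gamma> powr (real m ^ 2 / (2 * \<xi>))"
    unfolding P unfolding d using m \<gamma> \<xi> by (intro small_ball_radius_powr) auto
  ultimately show ?thesis
    using \<gamma> by (simp add: powr_def mult_ac)
qed

lemma sum_upper_quarter_reflect:
  "(\<Sum>k \<in> {nat \<lceil>3 * real n / 4\<rceil>..n}. real (n choose k) * f k)
     = (\<Sum>j \<in> {0..nat \<lfloor>real n / 4\<rfloor>}. real (n choose j) * f (n - j))"
proof -
  have "n - nat \<lceil>3 * real n / 4\<rceil> = nat \<lfloor>real n / 4\<rfloor>"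
    by linarith
  then show ?thesis
    by (intro sum.reindex_bij_witness[of _ "\<lambda>j. n - j" "\<lambda>k. n - k"])
      (auto simp: binomial_symmetric[symmetric] le_nat_floor_quarter_iff)
qed

lemma R_ratio_tail_bounds:
  assumes m: "m \<ge> 1" and P: "goe_small_prob m d \<ge> 2 powr (- real n) * exp \<beta>"
    and j: "4 * j \<le> n" and k: "k = j \<or> k = n - j"
  shows "R_ratio m n k d \<le> 2 ^ n * exp (- \<beta>)"
    and "0 < j \<Longrightarrow> R_ratio m n k d \<le> (real n / real j) powr (real m ^ 2 / 2)"
proof -
  have P_pos: "goe_small_prob m d > 0"
    using P by (rule less_le_trans[rotated]) simp
  have "R_ratio m n k d \<le> 1 / goe_small_prob m d"
    by (rule R_ratio_le_inverse[OF m P_pos])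
  also have "\<dots> \<le> 1 / (2 powr (- real n) * exp \<beta>)"
    using P P_pos by (intro divide_left_mono) auto
  also have "\<dots> = 2 ^ n * exp (- \<beta>)"
    by (simp add: powr_minus_divide powr_realpow exp_minus divide_inverse)
  finally show "R_ratio m n k d \<le> 2 ^ n * exp (- \<beta>)" .
  assume "0 < j"
  with j k have "0 < k" "k < n" "min k (n - k) = j"
    by auto
  then show "R_ratio m n k d \<le> (real n / real j) powr (real m ^ 2 / 2)"
    using R_ratio_le_powr[OF m P_pos] by metis
qed

theorem lemma3p3:
  fixes m :: "nat \<Rightarrow> nat" and \<xi> :: "nat \<Rightarrow> real" and \<delta> :: "nat \<Rightarrow> real" and \<gamma> :: real
  assumes m_inf: "filterlim (\<lambda>n. real (m n) ^ 2) at_top sequentially"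
    and m_small: "(\<lambda>n. real (m n) ^ 2 / real n) \<longlonglongrightarrow> 0"
    and \<gamma>: "\<gamma> > 1"
    and \<delta>_def: "\<And>n. \<delta> n = \<gamma> * 2 * exp (- 3 / 4) * sqrt (real (m n)) * 4 powr (- \<xi> n * real n / real (m n) ^ 2)"
    and \<xi>_def: "\<And>n. goe_small_prob (m n) (\<delta> n) =
                  (exp (3 / 4) / (2 * sqrt (real (m n))) * \<delta> n) powr (real (m n) ^ 2 / (2 * \<xi> n))"
    and \<xi>_lim: "\<xi> \<longlonglongrightarrow> 1"
  shows "(\<lambda>n. 2 powr (- real n) * (\<Sum>k \<in> {0..nat \<lfloor>real n / 4\<rfloor>}. real (n choose k) * R_ratio (m n) n k (\<delta> n))
            + 2 powr (- real n) * (\<Sum>k \<in> {nat \<lceil>3 * real n / 4\<rceil>..n}. real (n choose k) * R_ratio (m n) n k (\<delta> n)))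
         \<longlonglongrightarrow> 0"
proof -
  have "ln \<gamma> / 4 > 0"
    using \<gamma> by simp
  have "\<forall>\<^sub>F n in sequentially. 1 \<le> real (m n) ^ 2"
    using m_inf by (simp add: filterlim_at_top)
  moreover have "\<forall>\<^sub>F n in sequentially. 0 < \<xi> n" "\<forall>\<^sub>F n in sequentially. \<xi> n < 2"
    using \<xi>_lim by (auto intro: order_tendstoD)
  ultimately have "\<forall>\<^sub>F n in sequentially. 1 \<le> m n
      \<and> goe_small_prob (m n) (\<delta> n) \<ge> 2 powr (- real n) * exp (ln \<gamma> / 4 * real (m n) ^ 2)"
  proof eventually_elim
    case (elim n)
    then have "1 \<le> m n"
      by (cases "m n") auto
    with elim show ?case
      using goe_small_prob_lower_bound[OF _ \<gamma> _ _ \<delta>_def \<xi>_def] by simp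
  qed
  then have lim: "(\<lambda>n. 2 powr (- real n)
      * (\<Sum>j \<in> {0..nat \<lfloor>real n / 4\<rfloor>}. real (n choose j) * R_ratio (m n) n (g n j) (\<delta> n))) \<longlonglongrightarrow> 0"
    if g: "\<And>n j. g n j = j \<or> g n j = n - j" for g
    by (intro binomial_weighted_sum_tendsto_0[OF m_small m_inf \<open>ln \<gamma> / 4 > 0\<close>])
      (auto elim!: eventually_mono intro: R_ratio_nonneg R_ratio_tail_bounds[OF _ _ _ g])
  show ?thesis
    unfolding sum_upper_quarter_reflect using tendsto_add[OF lim[of "\<lambda>n j. j"] lim[of "\<lambda>n j. n - j"]]
    by simp
qed

end
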